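(* For $\mathrm{DSS}(n,k,d,1,\alpha=M/k,\alpha'=\beta,\beta,M)$ in a packet erasure network in which every link from a helper to the new node erases each packet independently with probability $p\in[0,1)$, with each helper transmitting $\beta'=\beta/(1-p)$ packets, the asymptotic optimal (minimum-storage) repair-bandwidth is $$\gamma'_{\mathrm{MSR}}=\frac{M(d+1)}{k(d-k+2)(1-p)}.$$
   Context: $\mathrm{DSS}(n,k,d,h,\alpha,\alpha',\beta,M)$: $n$ complete storage nodes of capacity $\alpha$ with the property that any $k$ reconstruct a file of $M$ packets, plus $h$ repairing storage nodes of capacity $\alpha'$ used only for repair; a failed complete node is replaced using data from $d$ surviving complete nodes and all $h$ repairing nodes. The asymptotic repair-bandwidth is the total number $(d+h)\beta'$ of transmitted packets, in the limit of infinitely many packet transmissions, needed for repair preserving the reconstruction property. *)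

theory Defs
  imports "HOL-Analysis.Analysis"
begin

text \<open>Vertices: the source, the in/out vertices of complete storage nodes (indexed by
  creation time: initial nodes 0..n-1, the newcomer of the j-th repair gets index n+j),
  the in/out vertices of the h repairing nodes, and one data collector.\<close>

datatype vtx = Src | NIn nat | NOut nat | RIn nat | ROut nat | DC

text \<open>A repair event: (index of the failed complete node, set of its d helpers).\<close>
type_synonym event = "nat \<times> nat set"

fun act :: "nat \<Rightarrow> event list \<Rightarrow> nat \<Rightarrow> nat set" where
  "act n es 0 = {..<n}"
| "act n es (Suc j) = (act n es j - {fst (es ! j)}) \<union> {n + j}"

definition valid_history :: "nat \<Rightarrow> nat \<Rightarrow> event list \<Rightarrow> bool" where
  "valid_history n d es \<longleftrightarrow>
     (\<forall>j<length es. fst (es ! j) \<in> act n es j \<and>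
        snd (es ! j) \<subseteq> act n es j - {fst (es ! j)} \<and> card (snd (es ! j)) = d)"

definition vertices :: "nat \<Rightarrow> nat \<Rightarrow> event list \<Rightarrow> vtx set" where
  "vertices n h es = {Src, DC} \<union> NIn ` {..<n + length es} \<union> NOut ` {..<n + length es}
      \<union> RIn ` {..<h} \<union> ROut ` {..<h}"

text \<open>Edge capacities. \<open>c\<close> is the (effective) capacity of every link from a helper
  (complete or repairing node) to a newcomer; \<open>T\<close> is the set of complete nodes the data
  collector connects to.\<close>
fun cap :: "nat \<Rightarrow> nat \<Rightarrow> real \<Rightarrow> real \<Rightarrow> real \<Rightarrow> event list \<Rightarrow> nat set
            \<Rightarrow> vtx \<Rightarrow> vtx \<Rightarrow> ereal" where
  "cap n h \<alpha> \<alpha>' c es T Src (NIn i) = (if i < n then \<infinity> else 0)"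
| "cap n h \<alpha> \<alpha>' c es T (NIn i) (NOut i') =
     (if i = i' \<and> i < n + length es then ereal \<alpha> else 0)"
| "cap n h \<alpha> \<alpha>' c es T (NOut i) (NIn i') =
     (if n \<le> i' \<and> i' < n + length es \<and> i \<in> snd (es ! (i' - n)) then ereal c else 0)"
| "cap n h \<alpha> \<alpha>' c es T Src (RIn r) = (if r < h then \<infinity> else 0)"
| "cap n h \<alpha> \<alpha>' c es T (RIn r) (ROut r') = (if r = r' \<and> r < h then ereal \<alpha>' else 0)"
| "cap n h \<alpha> \<alpha>' c es T (ROut r) (NIn i') =
     (if r < h \<and> n \<le> i' \<and> i' < n + length es then ereal c else 0)"
| "cap n h \<alpha> \<alpha>' c es T (NOut i) DC = (if i \<in> T then \<infinity> else 0)"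
| "cap n h \<alpha> \<alpha>' c es T u v = 0"

definition cut_value :: "nat \<Rightarrow> nat \<Rightarrow> real \<Rightarrow> real \<Rightarrow> real \<Rightarrow> event list \<Rightarrow> nat set
                          \<Rightarrow> vtx set \<Rightarrow> ereal" where
  "cut_value n h \<alpha> \<alpha>' c es T U =
     (\<Sum>(u, v) \<in> {(u, v). u \<in> vertices n h es \<and> v \<in> vertices n h es \<and> u \<in> U \<and> v \<notin> U}.
        cap n h \<alpha> \<alpha>' c es T u v)"

definition min_cut :: "nat \<Rightarrow> nat \<Rightarrow> real \<Rightarrow> real \<Rightarrow> real \<Rightarrow> event list \<Rightarrow> nat set \<Rightarrow> ereal" where
  "min_cut n h \<alpha> \<alpha>' c es T =
     Inf (cut_value n h \<alpha> \<alpha>' c es T ` {U. U \<subseteq> vertices n h es \<and> Src \<in> U \<and> DC \<notin> U})"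

definition feasible :: "nat \<Rightarrow> nat \<Rightarrow> nat \<Rightarrow> nat \<Rightarrow> real \<Rightarrow> real \<Rightarrow> real \<Rightarrow> real \<Rightarrow> bool" where
  "feasible n k d h \<alpha> \<alpha>' c M \<longleftrightarrow>
     (\<forall>es T. valid_history n d es \<and> T \<subseteq> act n es (length es) \<and> card T = k
        \<longrightarrow> ereal M \<le> min_cut n h \<alpha> \<alpha>' c es T)"

text \<open>Asymptotic throughput (capacity) of a packet erasure link with erasure probability p
  over which b packets are transmitted.\<close>
definition erasure_capacity :: "real \<Rightarrow> real \<Rightarrow> real" where
  "erasure_capacity p b = (1 - p) * b"

end

theory Submission
  imports Defs
begin

(* With one repairing node (h = 1), alpha' = beta and effective link capacity
   beta, and a file of size M = k * alpha, the system is feasible exactly when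
   alpha <= (d - k + 2) * beta.  The corollary follows by minimising the transmitted
   repair-bandwidth (d + 1) * beta / (1 - p) over the feasible beta, since the erasure
   link of capacity (1 - p) * beta' turns beta' = beta / (1 - p) transmitted packets
   into beta effective ones.

   Sufficiency of the storage bound is a min-cut lower bound: for any finite
   cut, take the k smallest complete nodes whose out-vertex lies on the sink side; the
   i-th of them contributes either alpha (its storage edge is cut) or at least
   (d - i + 1) * beta from its helpers and the repairing node.  Necessity is witnessed by
   one explicit repair and one explicit cut of value (k - 1) alpha + (d - k + 2) beta. *)

lemma act_subset: "act n es j \<subseteq> {..<n + j}"
  by (induction j) auto

lemma helper_precedes:
  assumes "valid_history n d es" "j < length es" "i \<in> snd (es ! j)"
  shows "i < n + j"
  using assms act_subset unfolding valid_history_def by blast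

lemma finite_vertices: "finite (vertices n h es)"
  by (simp add: vertices_def)

lemma cap_nonneg: "0 \<le> \<alpha> \<Longrightarrow> 0 \<le> \<alpha>' \<Longrightarrow> 0 \<le> c \<Longrightarrow> 0 \<le> cap n h \<alpha> \<alpha>' c es T u v"
  by (cases u; cases v) auto

definition inflow :: "nat \<Rightarrow> nat \<Rightarrow> real \<Rightarrow> real \<Rightarrow> real \<Rightarrow> event list \<Rightarrow> nat set
                       \<Rightarrow> vtx set \<Rightarrow> vtx \<Rightarrow> ereal" where
  "inflow n h \<alpha> \<alpha>' c es T U v = (\<Sum>u\<in>vertices n h es \<inter> U. cap n h \<alpha> \<alpha>' c es T u v)"

lemma cut_value_inflow:
  "cut_value n h \<alpha> \<alpha>' c es T U = (\<Sum>v\<in>vertices n h es - U. inflow n h \<alpha> \<alpha>' c es T U v)"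
proof -
  have edges: "{(u, v). u \<in> vertices n h es \<and> v \<in> vertices n h es \<and> u \<in> U \<and> v \<notin> U}
                = (vertices n h es \<inter> U) \<times> (vertices n h es - U)" by auto
  show ?thesis
    unfolding cut_value_def inflow_def edges sum.cartesian_product[symmetric] by (rule sum.swap)
qed

lemma cut_value_infinite:
  assumes "u \<in> vertices n h es" "v \<in> vertices n h es" "u \<in> U" "v \<notin> U"
    and "cap n h \<alpha> \<alpha>' c es T u v = \<infinity>"
  shows "cut_value n h \<alpha> \<alpha>' c es T U = \<infinity>"
proof -
  have "finite {(u, v). u \<in> vertices n h es \<and> v \<in> vertices n h es \<and> u \<in> U \<and> v \<notin> U}"
    by (rule finite_subset[of _ "vertices n h es \<times> vertices n h es"]) (auto simp: finite_vertices)
  then show ?thesis unfolding cut_value_def sum_Pinfty using assms by force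
qed

lemma ereal_le_trans_real: "a \<le> b \<Longrightarrow> ereal b \<le> y \<Longrightarrow> ereal a \<le> y"
  by (metis ereal_less_eq(3) order_trans)

lemma inflow_ge_card:
  assumes "0 \<le> \<alpha>" "0 \<le> \<alpha>'" "0 \<le> c'" and S: "S \<subseteq> vertices n h es \<inter> U"
    and big: "\<And>u. u \<in> S \<Longrightarrow> ereal c \<le> cap n h \<alpha> \<alpha>' c' es T u v"
  shows "ereal (real (card S) * c) \<le> inflow n h \<alpha> \<alpha>' c' es T U v"
proof -
  have "ereal (real (card S) * c) = (\<Sum>u\<in>S. ereal c)" by simp
  also have "\<dots> \<le> (\<Sum>u\<in>S. cap n h \<alpha> \<alpha>' c' es T u v)" by (rule sum_mono) (rule big)
  also have "\<dots> \<le> inflow n h \<alpha> \<alpha>' c' es T U v"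
    unfolding inflow_def using S assms(1-3) cap_nonneg
    by (intro sum_mono2) (auto simp: finite_vertices)
  finally show ?thesis .
qed

lemma inflow_nonneg: "0 \<le> \<alpha> \<Longrightarrow> 0 \<le> \<alpha>' \<Longrightarrow> 0 \<le> c \<Longrightarrow> 0 \<le> inflow n h \<alpha> \<alpha>' c es T U v"
  unfolding inflow_def by (intro sum_nonneg) (simp add: cap_nonneg)

lemma inflow_storage:
  assumes "0 \<le> \<alpha>" "0 \<le> \<alpha>'" "0 \<le> c" "x < n + length es" "NIn x \<in> U"
  shows "ereal \<alpha> \<le> inflow n h \<alpha> \<alpha>' c es T U (NOut x)"
  using inflow_ge_card[of \<alpha> \<alpha>' c "{NIn x}" n h es U \<alpha> T "NOut x"] assms
  by (simp add: vertices_def)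

lemma inflow_repairing:
  assumes "0 \<le> \<alpha>" "0 \<le> \<alpha>'" "0 \<le> c" "r < h" "RIn r \<in> U"
  shows "ereal \<alpha>' \<le> inflow n h \<alpha> \<alpha>' c es T U (ROut r)"
  using inflow_ge_card[of \<alpha> \<alpha>' c "{RIn r}" n h es U \<alpha>' T "ROut r"] assms
  by (simp add: vertices_def)

lemma inflow_newcomer:
  assumes "0 \<le> \<alpha>" "0 \<le> \<alpha>'" "0 \<le> c" "n \<le> x" "x < n + length es"
  shows "ereal (real (card {i \<in> snd (es ! (x - n)). i < n + length es \<and> NOut i \<in> U}
                      + card {r. r < h \<and> ROut r \<in> U}) * c)
           \<le> inflow n h \<alpha> \<alpha>' c es T U (NIn x)"
proof -
  define G where "G = {i \<in> snd (es ! (x - n)). i < n + length es \<and> NOut i \<in> U}"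
  define R where "R = {r. r < h \<and> ROut r \<in> U}"
  have "finite G" "finite R" unfolding G_def R_def by auto
  then have "card (NOut ` G \<union> ROut ` R) = card G + card R"
    by (subst card_Un_disjoint) (auto simp: card_image inj_on_def)
  moreover have "ereal (real (card (NOut ` G \<union> ROut ` R)) * c) \<le> inflow n h \<alpha> \<alpha>' c es T U (NIn x)"
    using assms by (intro inflow_ge_card) (auto simp: G_def R_def vertices_def)
  ultimately show ?thesis unfolding G_def R_def by simp
qed

lemma initial_segment_exists:
  fixes V :: "nat set"
  assumes "finite V" "k \<le> card V"
  shows "\<exists>X\<subseteq>V. card X = k \<and> (\<forall>x\<in>X. \<forall>v\<in>V. v < x \<longrightarrow> v \<in> X)"
  using assms(2)
proof (induction k)
  case 0
  then show ?case by auto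
next
  case (Suc k)
  then obtain X where X: "X \<subseteq> V" "card X = k" "\<forall>x\<in>X. \<forall>v\<in>V. v < x \<longrightarrow> v \<in> X" by auto
  have "finite X" using X(1) assms(1) finite_subset by blast
  have "V - X \<noteq> {}" using X Suc.prems by auto
  define y where "y = Min (V - X)"
  have "finite (V - X)" using assms(1) by simp
  then have y: "y \<in> V - X" "\<forall>v\<in>V - X. y \<le> v"
    unfolding y_def using Min_in \<open>V - X \<noteq> {}\<close> by auto
  have "\<forall>x\<in>insert y X. \<forall>v\<in>V. v < x \<longrightarrow> v \<in> insert y X"
    using X(3) y by (metis Diff_iff insertCI insertE not_le)
  then show ?case
    using X y \<open>finite X\<close> by (intro exI[of _ "insert y X"]) auto
qed

lemma rank_less_card:
  fixes X :: "nat set"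
  assumes "finite X" "x \<in> X"
  shows "card (X \<inter> {..<x}) + 1 \<le> card X"
proof -
  have "X \<inter> {..<x} \<subseteq> X - {x}" by auto
  then have "card (X \<inter> {..<x}) \<le> card (X - {x})" using assms(1) by (intro card_mono) auto
  moreover have "card X > 0" using assms card_gt_0_iff by blast
  ultimately show ?thesis using assms by simp
qed

lemma rank_less_card_nonmax:
  fixes X :: "nat set"
  assumes "finite X" "x \<in> X" "x \<noteq> Max X"
  shows "card (X \<inter> {..<x}) + 2 \<le> card X"
proof -
  have "X \<noteq> {}" using assms(2) by auto
  then have "Max X \<in> X" "x \<le> Max X" using assms by auto
  then have "X \<inter> {..<x} \<subseteq> X - {x, Max X}" by auto
  then have "card (X \<inter> {..<x}) \<le> card (X - {x, Max X})" using assms(1) by (intro card_mono) auto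
  also have "\<dots> = card X - 2" using assms \<open>Max X \<in> X\<close> by (simp add: card_Diff_subset)
  finally show ?thesis using assms \<open>Max X \<in> X\<close> card_mono[of X "{x, Max X}"] by auto
qed

section \<open>Sufficiency: a min-cut lower bound\<close>

text \<open>Fix a valid history, a cut \<open>U\<close> that crosses no infinite edge (so the repairing node
  and all initial in-vertices are on the source side), and the \<open>k\<close> smallest nodes \<open>X\<close>
  whose out-vertex is on the sink side.\<close>
context
  fixes n k d :: nat and \<alpha> \<beta> :: real and es :: "event list" and T :: "nat set"
    and U :: "vtx set" and X :: "nat set"
  assumes valid: "valid_history n d es"
    and k_pos: "1 \<le> k" and k_le_d: "k \<le> d"
    and \<alpha>_nonneg: "0 \<le> \<alpha>" and \<beta>_nonneg: "0 \<le> \<beta>"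
    and storage: "\<alpha> \<le> (real d - real k + 2) * \<beta>"
    and repairing_in: "RIn 0 \<in> U"
    and initial_in: "\<And>x. x < n \<Longrightarrow> NIn x \<in> U"
    and X_sub: "X \<subseteq> {i. i < n + length es \<and> NOut i \<notin> U}" and X_card: "card X = k"
    and X_initial: "\<And>x i. x \<in> X \<Longrightarrow> i < x \<Longrightarrow> i < n + length es \<Longrightarrow> NOut i \<notin> U \<Longrightarrow> i \<in> X"
begin

lemma finite_X: "finite X"
  using X_sub by (rule finite_subset) auto

text \<open>A sink-side newcomer in \<open>X\<close> of rank \<open>r\<close> has at least \<open>d - r\<close> source-side helpers,
  since all of its sink-side helpers precede it and hence lie in \<open>X\<close>.\<close>
lemma newcomer_bound:
  assumes xX: "x \<in> X" and xU: "NIn x \<notin> U"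
  shows "ereal (real (d - card (X \<inter> {..<x}) + (if ROut 0 \<in> U then 1 else 0)) * \<beta>)
           \<le> inflow n 1 \<alpha> \<beta> \<beta> es T U (NIn x)"
proof -
  have x_ge: "n \<le> x" using initial_in[of x] xU by (metis not_less)
  have x_less: "x < n + length es" using X_sub xX by auto
  define Hs where "Hs = snd (es ! (x - n))"
  have Hs: "card Hs = d" using valid x_ge x_less unfolding valid_history_def Hs_def by auto
  have helper_less: "i < x" if "i \<in> Hs" for i
    using helper_precedes[OF valid _ that[unfolded Hs_def]] x_ge x_less by fastforce
  define G where "G = {i \<in> Hs. i < n + length es \<and> NOut i \<in> U}"
  have "Hs - G \<subseteq> X \<inter> {..<x}"
    using helper_less X_initial[OF xX] x_less unfolding G_def by fastforce
  then have rank_le: "card (Hs - G) \<le> card (X \<inter> {..<x})" using finite_X by (intro card_mono) auto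
  have "finite Hs" using Hs k_pos k_le_d card.infinite by fastforce
  then have "card (Hs - G) = d - card G" "card G \<le> d"
    using Hs card_mono[of Hs G] by (auto simp: G_def card_Diff_subset)
  with rank_le have "d - card (X \<inter> {..<x}) \<le> card G" by linarith
  moreover have "{r. r < 1 \<and> ROut r \<in> U} = (if ROut 0 \<in> U then {0} else {})" by auto
  ultimately have "d - card (X \<inter> {..<x}) + (if ROut 0 \<in> U then 1 else 0)
                     \<le> card G + card {r. r < 1 \<and> ROut r \<in> U}" by simp
  then have "real (d - card (X \<inter> {..<x}) + (if ROut 0 \<in> U then 1 else 0)) * \<beta>
               \<le> real (card G + card {r. r < 1 \<and> ROut r \<in> U}) * \<beta>"
    using \<beta>_nonneg by (intro mult_right_mono) simp_all
  then show ?thesis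
    using inflow_newcomer[OF \<alpha>_nonneg \<beta>_nonneg \<beta>_nonneg x_ge x_less]
    unfolding G_def Hs_def by (rule ereal_le_trans_real)
qed

text \<open>Each node of \<open>X\<close> is charged \<open>\<alpha>\<close>: to its storage edge or its incoming edges, and the
  largest one additionally to the repairing node's storage edge if that is cut.\<close>
lemma node_bound:
  assumes xX: "x \<in> X"
  shows "ereal \<alpha> \<le> inflow n 1 \<alpha> \<beta> \<beta> es T U (if NIn x \<in> U then NOut x else NIn x)
            + (if x = Max X \<and> ROut 0 \<notin> U then inflow n 1 \<alpha> \<beta> \<beta> es T U (ROut 0) else 0)"
    (is "_ \<le> ?in + ?extra")
proof -
  have scaled: "\<alpha> \<le> N * \<beta>" if "real d - real k + 2 \<le> N" for N
    using storage mult_right_mono[OF that \<beta>_nonneg] by linarith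
  have extra_nonneg: "0 \<le> ?extra" using inflow_nonneg \<alpha>_nonneg \<beta>_nonneg by simp
  have rank: "card (X \<inter> {..<x}) + 1 \<le> k" using rank_less_card[OF finite_X xX] X_card by simp
  show ?thesis
  proof (cases "NIn x \<in> U")
    case True
    then have "ereal \<alpha> \<le> ?in"
      using X_sub xX inflow_storage[OF \<alpha>_nonneg \<beta>_nonneg \<beta>_nonneg] by auto
    then show ?thesis by (rule add_increasing2[OF extra_nonneg])
  next
    case False
    define r where "r = card (X \<inter> {..<x})"
    define s :: nat where "s = (if ROut 0 \<in> U then 1 else 0)"
    have in_eq: "?in = inflow n 1 \<alpha> \<beta> \<beta> es T U (NIn x)" using False by simp
    have newc: "ereal (real (d - r + s) * \<beta>) \<le> ?in"
      using newcomer_bound[OF xX False] unfolding in_eq r_def s_def .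
    consider "x \<noteq> Max X" | "x = Max X" "ROut 0 \<in> U" | "x = Max X" "ROut 0 \<notin> U" by blast
    then show ?thesis
    proof cases
      case 1
      then have "r + 2 \<le> k" using rank_less_card_nonmax[OF finite_X xX] X_card unfolding r_def by simp
      then have "\<alpha> \<le> real (d - r + s) * \<beta>"
        using k_le_d by (intro scaled) simp
      then have "ereal \<alpha> \<le> ?in" using newc by (rule ereal_le_trans_real)
      then show ?thesis by (rule add_increasing2[OF extra_nonneg])
    next
      case 2
      then have "\<alpha> \<le> real (d - r + s) * \<beta>"
        using rank k_le_d unfolding r_def s_def by (intro scaled) simp
      then have "ereal \<alpha> \<le> ?in" using newc by (rule ereal_le_trans_real)
      then show ?thesis by (rule add_increasing2[OF extra_nonneg])
    next
      case 3
      have "\<alpha> \<le> real (d - r + 1) * \<beta>"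
        using rank k_le_d unfolding r_def by (intro scaled) simp
      then have "ereal \<alpha> \<le> ereal (real (d - r + s) * \<beta>) + ereal \<beta>"
        using 3 by (simp add: s_def distrib_right)
      also have "\<dots> \<le> ?in + inflow n 1 \<alpha> \<beta> \<beta> es T U (ROut 0)"
        using newc inflow_repairing[OF \<alpha>_nonneg \<beta>_nonneg \<beta>_nonneg, of 0 1 U n es T] repairing_in
        by (intro add_mono) auto
      also have "inflow n 1 \<alpha> \<beta> \<beta> es T U (ROut 0) = ?extra" using 3 by simp
      finally show ?thesis .
    qed
  qed
qed

text \<open>Summing the charges over the distinct sink-side vertices they refer to.\<close>
lemma cut_value_lower_bound: "ereal (real k * \<alpha>) \<le> cut_value n 1 \<alpha> \<beta> \<beta> es T U"
proof -
  define tgt where "tgt x = (if NIn x \<in> U then NOut x else NIn x)" for x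
  define E where "E = (if ROut 0 \<in> U then {} else {ROut 0})"
  let ?inflow = "inflow n 1 \<alpha> \<beta> \<beta> es T U"
  have "Max X \<in> X" using finite_X X_card k_pos by (intro Max_in) auto
  have inj: "inj_on tgt X" unfolding inj_on_def tgt_def by auto
  have extra: "(\<Sum>x\<in>X. if x = Max X \<and> ROut 0 \<notin> U then ?inflow (ROut 0) else 0)
                 = (\<Sum>v\<in>E. ?inflow v)"
    using \<open>Max X \<in> X\<close> finite_X by (cases "ROut 0 \<in> U") (simp_all add: E_def)
  have "ereal (real k * \<alpha>) = (\<Sum>x\<in>X. ereal \<alpha>)" using X_card by simp
  also have "\<dots> \<le> (\<Sum>x\<in>X. ?inflow (tgt x)
                    + (if x = Max X \<and> ROut 0 \<notin> U then ?inflow (ROut 0) else 0))"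
    using node_bound unfolding tgt_def by (rule sum_mono)
  also have "\<dots> = (\<Sum>v\<in>tgt ` X. ?inflow v) + (\<Sum>v\<in>E. ?inflow v)"
    unfolding sum.distrib extra sum.reindex[OF inj] by simp
  also have "\<dots> = (\<Sum>v\<in>tgt ` X \<union> E. ?inflow v)"
    using finite_X by (intro sum.union_disjoint[symmetric]) (auto simp: E_def tgt_def)
  also have "\<dots> \<le> (\<Sum>v\<in>vertices n 1 es - U. ?inflow v)"
    using X_sub inflow_nonneg[OF \<alpha>_nonneg \<beta>_nonneg \<beta>_nonneg]
    by (intro sum_mono2) (auto simp: finite_vertices vertices_def tgt_def E_def)
  finally show ?thesis unfolding cut_value_inflow .
qed

end

text \<open>A cut of finite value leaves the repairing node, all initial in-vertices and the
  \<open>k\<close> out-vertices of \<open>T\<close> on the required sides, so the lower bound above applies.\<close>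
lemma cut_value_ge_file_size:
  assumes k_pos: "1 \<le> k" and k_le_d: "k \<le> d" and \<alpha>_nonneg: "0 \<le> \<alpha>" and \<beta>_nonneg: "0 \<le> \<beta>"
    and storage: "\<alpha> \<le> (real d - real k + 2) * \<beta>"
    and valid: "valid_history n d es" and T: "T \<subseteq> act n es (length es)" "card T = k"
    and U: "Src \<in> U" "DC \<notin> U"
  shows "ereal (real k * \<alpha>) \<le> cut_value n 1 \<alpha> \<beta> \<beta> es T U"
proof (cases "cut_value n 1 \<alpha> \<beta> \<beta> es T U = \<infinity>")
  case False
  let ?V = "vertices n 1 es" and ?L = "length es"
  have finite_edges: "cap n 1 \<alpha> \<beta> \<beta> es T u v \<noteq> \<infinity>"
    if "u \<in> ?V" "v \<in> ?V" "u \<in> U" "v \<notin> U" for u v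
    using cut_value_infinite that False by blast
  have repairing_in: "RIn 0 \<in> U"
    using finite_edges[of Src "RIn 0"] U by (auto simp: vertices_def)
  have initial_in: "NIn x \<in> U" if "x < n" for x
    using finite_edges[of Src "NIn x"] U that by (auto simp: vertices_def)
  define V' where "V' = {i. i < n + ?L \<and> NOut i \<notin> U}"
  have "T \<subseteq> V'"
  proof
    fix t assume "t \<in> T"
    then have "t < n + ?L" using T(1) act_subset by blast
    then show "t \<in> V'"
      using finite_edges[of "NOut t" DC] U \<open>t \<in> T\<close> by (auto simp: vertices_def V'_def)
  qed
  then have "k \<le> card V'" using T(2) card_mono[of V' T] by (auto simp: V'_def)
  then obtain X where X: "X \<subseteq> V'" "card X = k" "\<forall>x\<in>X. \<forall>v\<in>V'. v < x \<longrightarrow> v \<in> X"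
    using initial_segment_exists[of V' k] by (auto simp: V'_def)
  have X_initial: "i \<in> X" if "x \<in> X" "i < x" "i < n + ?L" "NOut i \<notin> U" for x i
    using X(3) that by (auto simp: V'_def)
  show ?thesis
    using cut_value_lower_bound[OF valid k_pos k_le_d \<alpha>_nonneg \<beta>_nonneg storage repairing_in
        initial_in X(1)[unfolded V'_def] X(2) X_initial] .
qed simp

lemma feasible_if_storage_bound:
  assumes "1 \<le> k" "k \<le> d" "0 \<le> \<alpha>" "0 \<le> \<beta>" "\<alpha> \<le> (real d - real k + 2) * \<beta>"
  shows "feasible n k d 1 \<alpha> \<beta> \<beta> (real k * \<alpha>)"
  unfolding feasible_def min_cut_def
  using cut_value_ge_file_size[OF assms] by (auto intro!: Inf_greatest)

section \<open>Necessity: an explicit small cut\<close>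

text \<open>After node \<open>n - 1\<close> is repaired from nodes \<open>0..d-1\<close> and the repairing node, a data
  collector on nodes \<open>0..k-2\<close> and the newcomer \<open>n\<close> is separated from the source by a cut
  through \<open>k - 1\<close> storage edges, the \<open>d - k + 1\<close> remaining helper links and the repairing
  node's link.\<close>
lemma single_repair_cut_value:
  fixes n k d :: nat
  defines "es \<equiv> [(n - 1, {..<d})]" and "T \<equiv> {..<k - 1} \<union> {n}"
  defines "U \<equiv> vertices n 1 es - ({DC, NIn n, NOut n} \<union> NOut ` {..<k - 1})"
  assumes k_pos: "1 \<le> k" and k_le_d: "k \<le> d" and d_less: "d < n"
  shows "cut_value n 1 \<alpha> \<beta> \<beta> es T U
           = ereal (real (k - 1) * \<alpha> + real (d - (k - 1)) * \<beta> + \<beta>)"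
proof -
  let ?cap = "cap n 1 \<alpha> \<beta> \<beta> es T" and ?V = "vertices n 1 es"
  have V: "?V = {Src, DC} \<union> NIn ` {..<n+1} \<union> NOut ` {..<n+1} \<union> RIn ` {..<1} \<union> ROut ` {..<1}"
    unfolding vertices_def es_def by simp
  define C where "C = {(u, v). u \<in> ?V \<and> v \<in> ?V \<and> u \<in> U \<and> v \<notin> U}"
  define E1 where "E1 = (\<lambda>i. (NIn i, NOut i)) ` {..<k - 1}"
  define E2 where "E2 = (\<lambda>i. (NOut i, NIn n)) ` {k - 1..<d}"
  define E where "E = E1 \<union> E2 \<union> {(ROut 0, NIn n)}"
  have "finite C" unfolding C_def
    by (rule finite_subset[of _ "?V \<times> ?V"]) (auto simp: finite_vertices)
  moreover have "E \<subseteq> C" unfolding C_def E_def E1_def E2_def U_def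
    using k_pos k_le_d d_less by (auto simp: es_def vertices_def)
  moreover have "\<forall>e\<in>C - E. case_prod ?cap e = 0"
  proof
    fix e assume e: "e \<in> C - E"
    obtain u v where uv: "e = (u, v)" by fastforce
    have "u \<in> U" "u \<in> ?V" "v \<notin> U" "v \<in> ?V" "(u, v) \<notin> E" using e uv unfolding C_def by auto
    then show "case_prod ?cap e = 0" unfolding uv
      by (cases u) (auto simp: U_def V E_def E1_def E2_def T_def es_def image_iff split: if_splits)
  qed
  ultimately have "cut_value n 1 \<alpha> \<beta> \<beta> es T U = (\<Sum>e\<in>E. case_prod ?cap e)"
    unfolding cut_value_def C_def[symmetric] by (rule sum.mono_neutral_right)
  also have "\<dots> = (\<Sum>e\<in>E1 \<union> E2. case_prod ?cap e) + ?cap (ROut 0) (NIn n)"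
    unfolding E_def by (subst sum.union_disjoint) (auto simp: E1_def E2_def)
  also have "(\<Sum>e\<in>E1 \<union> E2. case_prod ?cap e)
               = (\<Sum>e\<in>E1. case_prod ?cap e) + (\<Sum>e\<in>E2. case_prod ?cap e)"
    by (rule sum.union_disjoint) (auto simp: E1_def E2_def)
  also have "(\<Sum>e\<in>E1. case_prod ?cap e) = (\<Sum>i<k - 1. ?cap (NIn i) (NOut i))"
    unfolding E1_def by (simp add: sum.reindex inj_on_def)
  also have "\<dots> = (\<Sum>i<k - 1. ereal \<alpha>)"
    using k_le_d d_less by (intro sum.cong) (auto simp: es_def)
  also have "(\<Sum>e\<in>E2. case_prod ?cap e) = (\<Sum>i\<in>{k - 1..<d}. ereal \<beta>)"
    unfolding E2_def by (subst sum.reindex) (auto simp: inj_on_def es_def)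
  also have "?cap (ROut 0) (NIn n) = ereal \<beta>" by (simp add: es_def)
  finally show ?thesis by simp
qed

lemma storage_bound_if_feasible:
  assumes k_pos: "1 \<le> k" and k_le_d: "k \<le> d" and d_less: "d < n"
    and feasible: "feasible n k d 1 \<alpha> \<beta> \<beta> (real k * \<alpha>)"
  shows "\<alpha> \<le> (real d - real k + 2) * \<beta>"
proof -
  define es where "es = [(n - 1, {..<d})]"
  define T where "T = {..<k - 1} \<union> {n}"
  define U where "U = vertices n 1 es - ({DC, NIn n, NOut n} \<union> NOut ` {..<k - 1})"
  have "valid_history n d es"
    unfolding valid_history_def es_def using d_less by (auto simp: subset_eq)
  moreover have "T \<subseteq> act n es (length es)" "card T = k"
    unfolding T_def es_def using k_pos k_le_d d_less by auto
  ultimately have "ereal (real k * \<alpha>) \<le> min_cut n 1 \<alpha> \<beta> \<beta> es T"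
    using feasible unfolding feasible_def by blast
  also have "\<dots> \<le> cut_value n 1 \<alpha> \<beta> \<beta> es T U"
    unfolding min_cut_def by (rule Inf_lower) (auto simp: U_def vertices_def)
  also have "\<dots> = ereal (real (k - 1) * \<alpha> + real (d - (k - 1)) * \<beta> + \<beta>)"
    unfolding es_def T_def U_def using k_pos k_le_d d_less by (rule single_repair_cut_value)
  finally show ?thesis using k_pos k_le_d by (simp add: algebra_simps)
qed

lemma feasible_iff_storage_bound:
  assumes "1 \<le> k" "k \<le> d" "d < n" "0 \<le> \<alpha>" "0 \<le> \<beta>"
  shows "feasible n k d 1 \<alpha> \<beta> \<beta> (real k * \<alpha>) \<longleftrightarrow> \<alpha> \<le> (real d - real k + 2) * \<beta>"
  using assms feasible_if_storage_bound storage_bound_if_feasible by blast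

lemma msr_feasible_iff:
  assumes "1 \<le> k" "k \<le> d" "d < n" "0 < M" "0 \<le> \<beta>"
  shows "feasible n k d 1 (M / k) \<beta> \<beta> M \<longleftrightarrow> M / (real k * (real d - real k + 2)) \<le> \<beta>"
proof -
  have "0 \<le> M / real k" "real k * (M / real k) = M" using assms(1,4) by simp_all
  then have "feasible n k d 1 (M / k) \<beta> \<beta> M \<longleftrightarrow> M / real k \<le> (real d - real k + 2) * \<beta>"
    using feasible_iff_storage_bound[OF assms(1-3) _ assms(5), of "M / real k"] by simp
  also have "\<dots> \<longleftrightarrow> M / (real k * (real d - real k + 2)) \<le> \<beta>"
    using assms(1,2) by (simp add: pos_divide_le_eq mult_ac)
  finally show ?thesis .
qed

text \<open>Each helper transmits \<open>\<beta> / (1 - p)\<close> packets, of which \<open>\<beta>\<close> arrive asymptotically, so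
  the transmitted bandwidth \<open>(d + 1) \<beta> / (1 - p)\<close> is minimised at the least feasible \<open>\<beta>\<close>.\<close>
theorem corollary2:
  fixes n k d :: nat and M p :: real
  assumes "1 \<le> k" and "k \<le> d" and "d < n" and "M > 0" and "0 \<le> p" and "p < 1"
  shows "(let S = {real (d + 1) * (\<beta> / (1 - p)) | \<beta>. \<beta> \<ge> 0 \<and>
                 feasible n k d 1 (M / k) \<beta> (erasure_capacity p (\<beta> / (1 - p))) M};
              \<gamma> = M * (d + 1) / (k * (d - k + 2) * (1 - p))
          in \<gamma> \<in> S \<and> (\<forall>x\<in>S. \<gamma> \<le> x))"
proof -
  define \<beta>\<^sub>0 where "\<beta>\<^sub>0 = M / (real k * (real d - real k + 2))"
  have "\<beta>\<^sub>0 > 0" unfolding \<beta>\<^sub>0_def using assms by simp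
  have feasible_iff: "feasible n k d 1 (M / k) \<beta> \<beta> M \<longleftrightarrow> \<beta>\<^sub>0 \<le> \<beta>" if "0 \<le> \<beta>" for \<beta>
    unfolding \<beta>\<^sub>0_def using msr_feasible_iff[OF assms(1-4) that] .
  have capacity: "erasure_capacity p (\<beta> / (1 - p)) = \<beta>" for \<beta>
    unfolding erasure_capacity_def using assms(6) by simp
  have "real (d - k + 2) = real d - real k + 2" using assms(2) by simp
  then have "real (k * (d - k + 2)) = real k * (real d - real k + 2)" by (simp only: of_nat_mult)
  then have \<gamma>_eq: "M * real (d + 1) / (real (k * (d - k + 2)) * (1 - p))
                    = real (d + 1) * (\<beta>\<^sub>0 / (1 - p))"
    unfolding \<beta>\<^sub>0_def by simp
  have monotone: "real (d + 1) * (\<beta>\<^sub>0 / (1 - p)) \<le> real (d + 1) * (\<beta> / (1 - p))" if "\<beta>\<^sub>0 \<le> \<beta>" for \<beta>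
    using that assms(6) by (intro mult_left_mono divide_right_mono) auto
  show ?thesis
    unfolding Let_def capacity \<gamma>_eq using \<open>\<beta>\<^sub>0 > 0\<close> feasible_iff monotone by fastforce
qed

end
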